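(* Assume (A1)–(A4), let $b$ be consistent, $\delta>0$, $\tau>1$, $\|b^\delta-b\|\le\delta$, and let $k_\delta$ be the first index $k\ge1$ with $\rho_1^2\|Ax_k^\delta-b^\delta\|^2+\rho_2^2\|Wx_k^\delta-y_k^\delta\|^2\le\max(\rho_1^2,\rho_2^2)\tau^2\delta^2$. Then there exist constants $c,C>0$ depending only on $\rho_2,\tau,c_0$ such that for every integer $1\le m<k_\delta-1$ and every feasible point $(\hat x,\hat y)$, $$D_{\mu_{k_\delta}^\delta}f(\hat y,y_{k_\delta}^\delta)+cE_{k_\delta}^\delta\le D_{\mu_m^\delta}f(\hat y,y_m^\delta)+\max\{\rho_1,\rho_2\}\tau\delta^2+C\|W(\hat x-x_m^\delta)\|^2+CE_m^\delta+C\|s_m^\delta\|^2+C\big|\langle y_{m-1}^\delta-y_m^\delta,W(\hat x-x_{m+1}^\delta)\rangle\big|$$ and $$\big|\langle\mu_{k_\delta}^\delta,y_{k_\delta}^\delta-\hat y\rangle\big|\le\big|\langle\mu_m^\delta,y_{k_\delta}^\delta-\hat y\rangle\big|+\max\{\rho_1,\rho_2\}\tau\delta^2+C\sum_{k=m}^{k_\delta}E_k^\delta+C\|W(x_{k_\delta}^\delta-\hat x)\|^2.$$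
   Context: $\mathcal X,\mathcal Y,\mathcal H$ are real Hilbert spaces. Standing assumptions: (A1) $A:\mathcal X\to\mathcal H$ is bounded linear. (A2) $f:\mathcal Y\to(-\infty,\infty]$ is proper, lower semicontinuous and strongly convex with constant $c_0>0$: $f(ty_1+(1-t)y_2)+c_0t(1-t)\|y_1-y_2\|^2\le tf(y_1)+(1-t)f(y_2)$ for all $y_1,y_2$, $t\in[0,1]$. (A3) $W:\mathscr D(W)\subset\mathcal X\to\mathcal Y$ is a densely defined closed linear operator. (A4) There is $c_1>0$ with $\|Ax\|^2+\|Wx\|^2\ge c_1\|x\|^2$ for all $x\in\mathscr D(W)$. $\mathscr D(f)=\{y:f(y)<\infty\}$; $b$ is consistent if $b=Ax$ for some $x\in\mathscr D(W)$ with $Wx\in\mathscr D(f)$. A feasible point is a pair $(\hat x,\hat y)$ with $\hat x\in\mathscr D(W)$, $\hat y\in\mathscr D(f)$, $A\hat x=b$, $W\hat x=\hat y$. Noisy ADMM: fix $\rho_1,\rho_2>0$ and initial $y_0^\delta\in\mathcal Y$, $\lambda_0^\delta\in\mathcal H$, $\mu_0^\delta\in\mathcal Y$. For $k=0,1,\dots$: $x_{k+1}^\delta=\arg\min_{x\in\mathscr D(W)}\{\langle\lambda_k^\delta,Ax\rangle+\langle\mu_k^\delta,Wx\rangle+\frac{\rho_1}{2}\|Ax-b^\delta\|^2+\frac{\rho_2}{2}\|Wx-y_k^\delta\|^2\}$, $y_{k+1}^\delta=\arg\min_{y\in\mathcal Y}\{f(y)-\langle\mu_k^\delta,y\rangle+\frac{\rho_2}{2}\|Wx_{k+1}^\delta-y\|^2\}$,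 $\lambda_{k+1}^\delta=\lambda_k^\delta+\rho_1(Ax_{k+1}^\delta-b^\delta)$, $\mu_{k+1}^\delta=\mu_k^\delta+\rho_2(Wx_{k+1}^\delta-y_{k+1}^\delta)$. (These minimizers exist and are unique; $\mu_k^\delta\in\partial f(y_k^\delta)$ for $k\ge1$.) Notation: $r_k^\delta=Ax_k^\delta-b^\delta$, $s_k^\delta=Wx_k^\delta-y_k^\delta$, $E_k^\delta=\rho_1\|r_k^\delta\|^2+\rho_2\|s_k^\delta\|^2+\rho_2\|y_k^\delta-y_{k-1}^\delta\|^2$ for $k\ge1$. Bregman distance: for $y$ with $\mu\in\partial f(y)$, $D_\mu f(\bar y,y)=f(\bar y)-f(y)-\langle\mu,\bar y-y\rangle$. *)

theory Defs
  imports "HOL-Analysis.Analysis"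
begin

definition proper_fun :: "('y \<Rightarrow> ereal) \<Rightarrow> bool" where
  "proper_fun f \<longleftrightarrow> (\<forall>y. f y \<noteq> -\<infinity>) \<and> (\<exists>y. f y \<noteq> \<infinity>)"

definition lsc_fun :: "('y::topological_space \<Rightarrow> ereal) \<Rightarrow> bool" where
  "lsc_fun f \<longleftrightarrow> (\<forall>y. f y \<le> Liminf (at y) f)"

definition strongly_convex :: "('y::real_normed_vector \<Rightarrow> ereal) \<Rightarrow> real \<Rightarrow> bool" where
  "strongly_convex f c0 \<longleftrightarrow>
     (\<forall>y1 y2 t. 0 \<le> t \<and> t \<le> 1 \<longrightarrow>
        f (t *\<^sub>R y1 + (1 - t) *\<^sub>R y2) + ereal (c0 * t * (1 - t) * (norm (y1 - y2))\<^sup>2)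
          \<le> ereal t * f y1 + ereal (1 - t) * f y2)"

definition effdom :: "('y \<Rightarrow> ereal) \<Rightarrow> 'y set" where
  "effdom f = {y. f y < \<infinity>}"

definition subdiff :: "('y::real_inner \<Rightarrow> ereal) \<Rightarrow> 'y \<Rightarrow> 'y set" where
  "subdiff f y = {\<mu>. f y < \<infinity> \<and> (\<forall>z. f y + ereal (inner \<mu> (z - y)) \<le> f z)}"

definition bregman :: "('y::real_inner \<Rightarrow> ereal) \<Rightarrow> 'y \<Rightarrow> 'y \<Rightarrow> 'y \<Rightarrow> ereal" where
  "bregman f \<mu> ybar y = f ybar - f y - ereal (inner \<mu> (ybar - y))"

definition dd_closed_linear_op :: "'x::real_normed_vector set \<Rightarrow> ('x \<Rightarrow> 'y::real_normed_vector) \<Rightarrow> bool" where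
  "dd_closed_linear_op D W \<longleftrightarrow>
     subspace D \<and> closure D = UNIV \<and>
     (\<forall>x\<in>D. \<forall>z\<in>D. W (x + z) = W x + W z) \<and>
     (\<forall>x\<in>D. \<forall>a. W (a *\<^sub>R x) = a *\<^sub>R W x) \<and>
     closed {(x, W x) | x. x \<in> D}"

definition noisy_admm ::
  "('x::real_inner \<Rightarrow> 'h::real_inner) \<Rightarrow> 'x set \<Rightarrow> ('x \<Rightarrow> 'y::real_inner) \<Rightarrow> ('y \<Rightarrow> ereal)
   \<Rightarrow> real \<Rightarrow> real \<Rightarrow> 'h
   \<Rightarrow> (nat \<Rightarrow> 'x) \<Rightarrow> (nat \<Rightarrow> 'y) \<Rightarrow> (nat \<Rightarrow> 'h) \<Rightarrow> (nat \<Rightarrow> 'y) \<Rightarrow> bool" where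
  "noisy_admm A D W f \<rho>1 \<rho>2 b\<delta> xs ys lam mu \<longleftrightarrow>
     (\<forall>k. xs (Suc k) \<in> D \<and>
        (\<forall>x\<in>D. inner (lam k) (A (xs (Suc k))) + inner (mu k) (W (xs (Suc k)))
                 + \<rho>1 / 2 * (norm (A (xs (Suc k)) - b\<delta>))\<^sup>2
                 + \<rho>2 / 2 * (norm (W (xs (Suc k)) - ys k))\<^sup>2
               \<le> inner (lam k) (A x) + inner (mu k) (W x)
                 + \<rho>1 / 2 * (norm (A x - b\<delta>))\<^sup>2
                 + \<rho>2 / 2 * (norm (W x - ys k))\<^sup>2)) \<and>
     (\<forall>k. \<forall>y. f (ys (Suc k)) + ereal (- inner (mu k) (ys (Suc k))
                 + \<rho>2 / 2 * (norm (W (xs (Suc k)) - ys (Suc k)))\<^sup>2)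
               \<le> f y + ereal (- inner (mu k) y + \<rho>2 / 2 * (norm (W (xs (Suc k)) - y))\<^sup>2)) \<and>
     (\<forall>k. lam (Suc k) = lam k + \<rho>1 *\<^sub>R (A (xs (Suc k)) - b\<delta>)) \<and>
     (\<forall>k. mu (Suc k) = mu k + \<rho>2 *\<^sub>R (W (xs (Suc k)) - ys (Suc k)))"

text \<open>E_k = rho1 |r_k|^2 + rho2 |s_k|^2 + rho2 |y_k - y_(k-1)|^2 (used for k >= 1).\<close>
definition admm_E ::
  "('x \<Rightarrow> 'h::real_normed_vector) \<Rightarrow> ('x \<Rightarrow> 'y::real_normed_vector) \<Rightarrow> real \<Rightarrow> real \<Rightarrow> 'h
   \<Rightarrow> (nat \<Rightarrow> 'x) \<Rightarrow> (nat \<Rightarrow> 'y) \<Rightarrow> nat \<Rightarrow> real" where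
  "admm_E A W \<rho>1 \<rho>2 b\<delta> xs ys k =
     \<rho>1 * (norm (A (xs k) - b\<delta>))\<^sup>2 + \<rho>2 * (norm (W (xs k) - ys k))\<^sup>2
     + \<rho>2 * (norm (ys k - ys (k - 1)))\<^sup>2"

end

theory Submission
  imports Defs
begin

text \<open>
  The estimates come from a Lyapunov argument for the iterates. Optimality of the \<open>x\<close>-step,
  tested with \<open>x\<^sub>k\<^sub>+\<^sub>1 - x\<^sub>k\<close>, together with the strong monotonicity of \<open>\<partial>f\<close> shows that the
  residual energy \<open>E\<^sub>k\<close> is nonincreasing, and more precisely that its decrements control
  \<open>|u\<^sub>k|\<^sup>2\<close> and \<open>|W(x\<^sub>k\<^sub>+\<^sub>1 - x\<^sub>k) - u\<^sub>k|\<^sup>2\<close>, where \<open>u\<^sub>k = y\<^sub>k - y\<^sub>k\<^sub>-\<^sub>1\<close>. Tested instead with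
  \<open>x\<^sub>h - x\<^sub>k\<^sub>+\<^sub>1\<close>, the same optimality condition expresses the change of the Bregman distance
  to the feasible point as a descent term plus cross terms. Before the stopping index the
  discrepancy principle lets the residual dominate the noise, so the descent term is at most
  \<open>-\<eta> E\<^sub>k\<^sub>+\<^sub>1\<close>; at the stopping index it is at most \<open>max(\<rho>\<^sub>1, \<rho>\<^sub>2) \<tau> \<delta>\<^sup>2\<close>. The cross terms
  telescope against multiples of \<open>E\<close>, and the decrease \<open>\<eta> E\<^sub>n\<close> gained at every step pays
  for moving the final cross term back to index \<open>m\<close>. The bound on the multipliers follows
  the same pattern: consecutive differences of \<open>\<langle>\<mu>\<^sub>k, W x\<^sub>h - y\<^sub>n\<rangle>\<close> are, after the optimality
  condition, bounded by \<open>E\<close>, and only the last one sees the noise.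
\<close>

lemma quadratic_nonneg_imp_linear_coeff_zero:
  fixes L c :: real
  assumes "c \<ge> 0" and nonneg: "\<And>t. 0 \<le> t * L + t\<^sup>2 * c"
  shows "L = 0"
proof -
  define t where "t = - L / (c + 1)"
  have t: "t * (c + 1) = - L" using \<open>c \<ge> 0\<close> unfolding t_def by simp
  have "(c + 1)\<^sup>2 * (t * L + t\<^sup>2 * c) = (c + 1) * (t * (c + 1)) * L + (t * (c + 1))\<^sup>2 * c"
    by (simp add: algebra_simps power2_eq_square)
  also have "\<dots> = - L\<^sup>2" unfolding t by (simp add: algebra_simps power2_eq_square)
  finally have "(c + 1)\<^sup>2 * (t * L + t\<^sup>2 * c) = - L\<^sup>2" .
  moreover have "0 \<le> (c + 1)\<^sup>2 * (t * L + t\<^sup>2 * c)" using nonneg[of t] by simp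
  ultimately show ?thesis by simp
qed

lemma abs_inner_le_half_sum_squares:
  fixes x y :: "'a::real_inner"
  shows "\<bar>inner x y\<bar> \<le> ((norm x)\<^sup>2 + (norm y)\<^sup>2) / 2"
proof -
  have "0 \<le> (norm x - norm y)\<^sup>2" by simp
  then have "norm x * norm y \<le> ((norm x)\<^sup>2 + (norm y)\<^sup>2) / 2"
    by (simp add: power2_eq_square algebra_simps)
  then show ?thesis using Cauchy_Schwarz_ineq2[of x y] by linarith
qed

lemma abs_scaled_inner_le:
  fixes x y :: "'a::real_inner"
  assumes "0 \<le> c"
  shows "2 * \<bar>c * inner x y\<bar> \<le> c * (norm x)\<^sup>2 + c * (norm y)\<^sup>2"
proof -
  have "c * (2 * \<bar>inner x y\<bar>) \<le> c * ((norm x)\<^sup>2 + (norm y)\<^sup>2)"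
    using abs_inner_le_half_sum_squares[of x y] assms by (intro mult_left_mono) auto
  then show ?thesis using assms by (simp add: abs_mult algebra_simps)
qed

lemma inner_le_weighted_squares:
  fixes x y :: "'a::real_inner"
  assumes "e > 0"
  shows "inner x y \<le> e * (norm x)\<^sup>2 + (norm y)\<^sup>2 / (4 * e)"
proof -
  have "0 \<le> (2 * e * norm x - norm y)\<^sup>2" by simp
  then have "4 * e * (norm x * norm y) \<le> 4 * e * (e * (norm x)\<^sup>2 + (norm y)\<^sup>2 / (4 * e))"
    using assms by (simp add: power2_eq_square algebra_simps)
  then have "norm x * norm y \<le> e * (norm x)\<^sup>2 + (norm y)\<^sup>2 / (4 * e)"
    using assms by simp
  then show ?thesis using Cauchy_Schwarz_ineq2[of x y] by linarith
qed

lemma norm_add_squared_le: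
  fixes x y :: "'a::real_normed_vector"
  shows "(norm (x + y))\<^sup>2 \<le> 2 * (norm x)\<^sup>2 + 2 * (norm y)\<^sup>2"
proof -
  have "(norm (x + y))\<^sup>2 \<le> (norm x + norm y)\<^sup>2"
    by (simp add: norm_triangle_ineq power_mono)
  also have "\<dots> \<le> 2 * (norm x)\<^sup>2 + 2 * (norm y)\<^sup>2"
    using sum_squares_bound[of "norm x" "norm y"] by (simp add: power2_sum)
  finally show ?thesis .
qed

lemma sum_increments_bound:
  fixes a d :: "nat \<Rightarrow> real"
  assumes "i \<le> j" and "\<And>q. i \<le> q \<Longrightarrow> q < j \<Longrightarrow> a (Suc q) \<le> a q + d q"
  shows "a j \<le> a i + (\<Sum>q = i..<j. d q)"
  using assms
proof (induction j rule: dec_induct)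
  case (step j)
  have "a (Suc j) \<le> a j + d j" using step.hyps step.prems by simp
  also have "a j \<le> a i + (\<Sum>q = i..<j. d q)" using step.IH step.prems by simp
  finally show ?case using step.hyps by simp
qed simp

lemma telescoping_increments_bound:
  fixes a g :: "nat \<Rightarrow> real"
  assumes "i \<le> j" and "\<And>q. i \<le> q \<Longrightarrow> q < j \<Longrightarrow> a (Suc q) \<le> a q + c + (g q - g (Suc q))"
  shows "a j \<le> a i + real (j - i) * c + (g i - g j)"
proof -
  have "a j \<le> a i + (\<Sum>q = i..<j. c + (g q - g (Suc q)))"
    using assms(1) by (rule sum_increments_bound) (use assms(2) in \<open>simp add: add.assoc\<close>)
  also have "(\<Sum>q = i..<j. c + (g q - g (Suc q))) = real (j - i) * c + (g i - g j)"
    using sum_Suc_diff'[OF \<open>i \<le> j\<close>, of "\<lambda>q. - g q"] by (simp add: sum.distrib)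
  finally show ?thesis by simp
qed

lemma dd_closed_linear_op_add_scaleR:
  assumes "dd_closed_linear_op D W" and "x \<in> D" and "z \<in> D"
  shows "W (x + t *\<^sub>R z) = W x + t *\<^sub>R W z"
proof -
  have "subspace D" using assms(1) unfolding dd_closed_linear_op_def by blast
  then have "t *\<^sub>R z \<in> D" using assms(3) by (rule subspace_scale)
  then show ?thesis using assms unfolding dd_closed_linear_op_def by simp
qed

lemma dd_closed_linear_op_diff:
  assumes "dd_closed_linear_op D W" and "x \<in> D" and "z \<in> D"
  shows "W (x - z) = W x - W z"
  using dd_closed_linear_op_add_scaleR[OF assms, of "-1"] by simp

section \<open>Proximal steps of strongly convex functions\<close>

lemma proper_fun_minimizer_finite:
  assumes "proper_fun f" and min: "\<And>z. f y + ereal (\<phi> y) \<le> f z + ereal (\<phi> z)"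
  shows "f y = ereal (real_of_ereal (f y))"
proof -
  obtain z where "f z \<noteq> \<infinity>" "f z \<noteq> - \<infinity>" using assms(1) unfolding proper_fun_def by blast
  then have "f y \<noteq> \<infinity>" using min[of z] by (cases "f z") auto
  moreover have "f y \<noteq> - \<infinity>" using assms(1) unfolding proper_fun_def by blast
  ultimately show ?thesis by (cases "f y") auto
qed

text \<open>Strong convexity along the segment from \<open>y\<close> to \<open>z\<close>, with step \<open>t = c0 / (2 c0 + \<rho>)\<close>, absorbs the
  quadratic penalty of the proximal problem and leaves the modulus \<open>c0 / 2\<close>.\<close>
lemma segment_minimality_imp_strong_subgradient:
  fixes z y a \<mu> :: "'a::real_inner" and Fz Fy Fyt t c0 \<rho> :: real
  assumes t: "t = c0 / (2 * c0 + \<rho>)" and "c0 > 0" and "\<rho> > 0"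
    and min: "Fy + (- inner \<mu> y + \<rho>/2 * (norm (a - y))\<^sup>2)
      \<le> Fyt + (- inner \<mu> (t *\<^sub>R z + (1 - t) *\<^sub>R y) + \<rho>/2 * (norm (a - (t *\<^sub>R z + (1 - t) *\<^sub>R y)))\<^sup>2)"
    and conv: "Fyt + c0 * t * (1 - t) * (norm (z - y))\<^sup>2 \<le> t * Fz + (1 - t) * Fy"
  shows "Fy + inner (\<mu> + \<rho> *\<^sub>R (a - y)) (z - y) + c0/2 * (norm (z - y))\<^sup>2 \<le> Fz"
proof -
  define v where "v = z - y"
  have yt: "t *\<^sub>R z + (1 - t) *\<^sub>R y = y + t *\<^sub>R v" by (simp add: v_def algebra_simps)
  have sq: "(norm (a - (y + t *\<^sub>R v)))\<^sup>2 = (norm (a - y))\<^sup>2 - 2 * t * inner (a - y) v + t\<^sup>2 * (norm v)\<^sup>2"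
    unfolding power2_norm_eq_inner
    by (simp add: inner_diff_left inner_diff_right inner_add_left inner_add_right inner_commute
        algebra_simps power2_eq_square)
  have "t > 0" using t \<open>c0 > 0\<close> \<open>\<rho> > 0\<close> by simp
  have coeff: "c0 * (1 - t) - \<rho> * t / 2 = c0 / 2" using t \<open>c0 > 0\<close> \<open>\<rho> > 0\<close> by (simp add: field_simps)
  have min': "Fy \<le> Fyt - t * inner \<mu> v - \<rho> * t * inner (a - y) v + \<rho>/2 * t\<^sup>2 * (norm v)\<^sup>2"
    using min unfolding yt sq by (simp add: inner_add_right algebra_simps)
  have conv': "Fyt \<le> t * Fz + (1 - t) * Fy - c0 * t * (1 - t) * (norm v)\<^sup>2"
    using conv v_def by simp
  have "t * Fy \<le> t * Fz - t * (inner \<mu> v + \<rho> * inner (a - y) v) - t * (c0 * (1 - t) - \<rho> * t / 2) * (norm v)\<^sup>2"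
    using min' conv' by (simp add: algebra_simps power2_eq_square)
  then have "t * Fy \<le> t * (Fz - (inner \<mu> v + \<rho> * inner (a - y) v) - c0/2 * (norm v)\<^sup>2)"
    unfolding coeff by (simp add: algebra_simps)
  then have "Fy \<le> Fz - (inner \<mu> v + \<rho> * inner (a - y) v) - c0/2 * (norm v)\<^sup>2"
    using \<open>t > 0\<close> by simp
  then show ?thesis by (simp add: v_def inner_add_left)
qed

lemma strongly_convex_prox_subgradient:
  fixes f :: "'a::real_inner \<Rightarrow> ereal"
  assumes "proper_fun f" and sc: "strongly_convex f c0" and "c0 > 0" and "\<rho> > 0"
    and min: "\<And>z. f y + ereal (- inner \<mu> y + \<rho>/2 * (norm (a - y))\<^sup>2)
                  \<le> f z + ereal (- inner \<mu> z + \<rho>/2 * (norm (a - z))\<^sup>2)"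
  shows "f y + ereal (inner (\<mu> + \<rho> *\<^sub>R (a - y)) (z - y) + c0/2 * (norm (z - y))\<^sup>2) \<le> f z"
proof (cases "f z = \<infinity>")
  case False
  have "f z \<noteq> - \<infinity>" using \<open>proper_fun f\<close> unfolding proper_fun_def by blast
  with False obtain Fz where Fz: "f z = ereal Fz" by (cases "f z") auto
  define Fy where "Fy = real_of_ereal (f y)"
  have Fy: "f y = ereal Fy" unfolding Fy_def using proper_fun_minimizer_finite[OF \<open>proper_fun f\<close> min] .
  define t where "t = c0 / (2 * c0 + \<rho>)"
  have "0 \<le> t" "t \<le> 1" using \<open>c0 > 0\<close> \<open>\<rho> > 0\<close> unfolding t_def by (auto simp: field_simps)
  define yt where "yt = t *\<^sub>R z + (1 - t) *\<^sub>R y"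
  have conv: "f yt + ereal (c0 * t * (1 - t) * (norm (z - y))\<^sup>2) \<le> ereal (t * Fz + (1 - t) * Fy)"
  proof -
    have "f yt + ereal (c0 * t * (1 - t) * (norm (z - y))\<^sup>2) \<le> ereal t * f z + ereal (1 - t) * f y"
      using sc \<open>0 \<le> t\<close> \<open>t \<le> 1\<close> unfolding strongly_convex_def yt_def by blast
    then show ?thesis unfolding Fz Fy by simp
  qed
  have "f yt \<noteq> \<infinity>" using conv by auto
  moreover have "f yt \<noteq> - \<infinity>" using \<open>proper_fun f\<close> unfolding proper_fun_def by blast
  ultimately obtain Fyt where Fyt: "f yt = ereal Fyt" by (cases "f yt") auto
  have "Fy + inner (\<mu> + \<rho> *\<^sub>R (a - y)) (z - y) + c0/2 * (norm (z - y))\<^sup>2 \<le> Fz"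
  proof (rule segment_minimality_imp_strong_subgradient[OF t_def \<open>c0 > 0\<close> \<open>\<rho> > 0\<close>])
    show "Fy + (- inner \<mu> y + \<rho>/2 * (norm (a - y))\<^sup>2)
      \<le> Fyt + (- inner \<mu> (t *\<^sub>R z + (1 - t) *\<^sub>R y) + \<rho>/2 * (norm (a - (t *\<^sub>R z + (1 - t) *\<^sub>R y)))\<^sup>2)"
      using min[of yt] unfolding Fy Fyt by (simp add: yt_def)
    show "Fyt + c0 * t * (1 - t) * (norm (z - y))\<^sup>2 \<le> t * Fz + (1 - t) * Fy"
      using conv unfolding Fyt by simp
  qed
  then show ?thesis unfolding Fy Fz by simp
qed simp

section \<open>Energy decay of the iteration\<close>

locale admm_iteration =
  fixes A :: "'x::real_inner \<Rightarrow> 'h::real_inner" and D :: "'x set" and W :: "'x \<Rightarrow> 'y::real_inner"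
    and f :: "'y \<Rightarrow> ereal" and c0 \<rho>1 \<rho>2 :: real and b\<delta> :: 'h
    and xs :: "nat \<Rightarrow> 'x" and ys :: "nat \<Rightarrow> 'y" and lam :: "nat \<Rightarrow> 'h" and mu :: "nat \<Rightarrow> 'y"
  assumes A: "bounded_linear A" and proper: "proper_fun f" and strongly_convex: "strongly_convex f c0"
    and W: "dd_closed_linear_op D W" and c0: "c0 > 0" and \<rho>1: "\<rho>1 > 0" and \<rho>2: "\<rho>2 > 0"
    and iteration: "noisy_admm A D W f \<rho>1 \<rho>2 b\<delta> xs ys lam mu"
begin

text \<open>\<open>F\<close> is \<open>f\<close> read as a real function; it is only used at points where \<open>f\<close> is finite.\<close>
definition F :: "'y \<Rightarrow> real" where "F y = real_of_ereal (f y)"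
definition r :: "nat \<Rightarrow> 'h" where "r k = A (xs k) - b\<delta>"
definition s :: "nat \<Rightarrow> 'y" where "s k = W (xs k) - ys k"
definition u :: "nat \<Rightarrow> 'y" where "u k = ys k - ys (k - 1)"
definition E :: "nat \<Rightarrow> real" where "E k = admm_E A W \<rho>1 \<rho>2 b\<delta> xs ys k"
definition Wstep :: "nat \<Rightarrow> 'y" where "Wstep k = W (xs (Suc k)) - W (xs k)"

lemma E_eq: "E k = \<rho>1 * (norm (r k))\<^sup>2 + \<rho>2 * (norm (s k))\<^sup>2 + \<rho>2 * (norm (u k))\<^sup>2"
  by (simp add: E_def admm_E_def r_def s_def u_def)

lemma E_nonneg: "0 \<le> E k"
  and E_ge_rs: "\<rho>1 * (norm (r k))\<^sup>2 + \<rho>2 * (norm (s k))\<^sup>2 \<le> E k"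
  and E_ge_u: "\<rho>2 * (norm (u k))\<^sup>2 \<le> E k"
  using \<rho>1 \<rho>2 unfolding E_eq by simp_all

lemma Wstep_eq: "Wstep k = s (Suc k) - s k + u (Suc k)"
  by (simp add: Wstep_def s_def u_def)

lemma A_diff: "A (x - z) = A x - A z"
  using A by (simp add: bounded_linear.linear linear_diff)

lemma x_step_min:
  "x \<in> D \<Longrightarrow> inner (lam k) (A (xs (Suc k))) + inner (mu k) (W (xs (Suc k)))
      + \<rho>1/2 * (norm (A (xs (Suc k)) - b\<delta>))\<^sup>2 + \<rho>2/2 * (norm (W (xs (Suc k)) - ys k))\<^sup>2
    \<le> inner (lam k) (A x) + inner (mu k) (W x) + \<rho>1/2 * (norm (A x - b\<delta>))\<^sup>2 + \<rho>2/2 * (norm (W x - ys k))\<^sup>2"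
  using iteration unfolding noisy_admm_def by blast

lemma y_step_min:
  "f (ys (Suc k)) + ereal (- inner (mu k) (ys (Suc k)) + \<rho>2/2 * (norm (W (xs (Suc k)) - ys (Suc k)))\<^sup>2)
    \<le> f y + ereal (- inner (mu k) y + \<rho>2/2 * (norm (W (xs (Suc k)) - y))\<^sup>2)"
  using iteration unfolding noisy_admm_def by blast

lemma xs_in_D: "1 \<le> k \<Longrightarrow> xs k \<in> D"
  using iteration unfolding noisy_admm_def by (cases k) auto

lemma lam_Suc: "lam (Suc k) = lam k + \<rho>1 *\<^sub>R r (Suc k)"
  using iteration unfolding noisy_admm_def r_def by blast

lemma mu_Suc: "mu (Suc k) = mu k + \<rho>2 *\<^sub>R s (Suc k)"
  using iteration unfolding noisy_admm_def s_def by blast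

lemma f_ys: "1 \<le> k \<Longrightarrow> f (ys k) = ereal (F (ys k))"
  using proper_fun_minimizer_finite[OF proper y_step_min] unfolding F_def by (cases k) auto

lemma mu_strong_subgradient:
  assumes "1 \<le> k" and "f z = ereal (F z)"
  shows "F (ys k) + inner (mu k) (z - ys k) + c0/2 * (norm (z - ys k))\<^sup>2 \<le> F z"
proof -
  obtain j where k: "k = Suc j" using assms(1) by (cases k) auto
  have "f (ys k) + ereal (inner (mu j + \<rho>2 *\<^sub>R (W (xs k) - ys k)) (z - ys k) + c0/2 * (norm (z - ys k))\<^sup>2) \<le> f z"
    unfolding k by (rule strongly_convex_prox_subgradient[OF proper strongly_convex c0 \<rho>2 y_step_min])
  moreover have "mu j + \<rho>2 *\<^sub>R (W (xs k) - ys k) = mu k" using mu_Suc[of j] unfolding k s_def ..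
  ultimately show ?thesis using assms f_ys by simp
qed

lemma x_step_optimality:
  assumes "1 \<le> k" and "w \<in> D"
  shows "inner (lam k) (A w) + inner (mu k + \<rho>2 *\<^sub>R u k) (W w) = 0"
proof -
  obtain j where k: "k = Suc j" using assms(1) by (cases k) auto
  have xk: "xs k \<in> D" using xs_in_D assms(1) .
  define objective where "objective x = inner (lam j) (A x) + inner (mu j) (W x)
    + \<rho>1/2 * (norm (A x - b\<delta>))\<^sup>2 + \<rho>2/2 * (norm (W x - ys j))\<^sup>2" for x
  define L where "L = inner (lam j) (A w) + inner (mu j) (W w)
    + \<rho>1 * inner (r k) (A w) + \<rho>2 * inner (W (xs k) - ys j) (W w)"
  have "L = 0"
  proof (rule quadratic_nonneg_imp_linear_coeff_zero)
    show "0 \<le> \<rho>1/2 * (norm (A w))\<^sup>2 + \<rho>2/2 * (norm (W w))\<^sup>2" using \<rho>1 \<rho>2 by simp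
    fix t :: real
    have "xs k + t *\<^sub>R w \<in> D"
      using W xk assms(2) unfolding dd_closed_linear_op_def by (simp add: subspace_add subspace_scale)
    then have "objective (xs k) \<le> objective (xs k + t *\<^sub>R w)"
      using x_step_min unfolding objective_def k by blast
    also have "objective (xs k + t *\<^sub>R w)
      = objective (xs k) + t * L + t\<^sup>2 * (\<rho>1/2 * (norm (A w))\<^sup>2 + \<rho>2/2 * (norm (W w))\<^sup>2)"
      unfolding objective_def L_def r_def dd_closed_linear_op_add_scaleR[OF W xk assms(2)]
        linear_add[OF bounded_linear.linear[OF A]] linear_scale[OF bounded_linear.linear[OF A]]
        power2_norm_eq_inner
      by (simp add: inner_diff_left inner_diff_right inner_add_left inner_add_right inner_commute
          algebra_simps power2_eq_square)
    finally show "0 \<le> t * L + t\<^sup>2 * (\<rho>1/2 * (norm (A w))\<^sup>2 + \<rho>2/2 * (norm (W w))\<^sup>2)" by simp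
  qed
  moreover have "mu k + \<rho>2 *\<^sub>R u k = mu j + \<rho>2 *\<^sub>R (W (xs k) - ys j)"
    using mu_Suc[of j] unfolding k s_def u_def by (simp add: algebra_simps)
  ultimately show ?thesis using lam_Suc[of j] unfolding L_def k by (simp add: inner_add_left)
qed

lemma increment_orthogonality:
  assumes "1 \<le> k" and "w \<in> D"
  shows "\<rho>1 * inner (r (Suc k)) (A w) + \<rho>2 * inner (s (Suc k) + u (Suc k) - u k) (W w) = 0"
proof -
  have "0 = (inner (lam (Suc k)) (A w) + inner (mu (Suc k) + \<rho>2 *\<^sub>R u (Suc k)) (W w))
          - (inner (lam k) (A w) + inner (mu k + \<rho>2 *\<^sub>R u k) (W w))"
    using x_step_optimality[OF _ assms(2)] assms(1) by simp
  also have "\<dots> = \<rho>1 * inner (r (Suc k)) (A w) + \<rho>2 * inner (s (Suc k) + u (Suc k) - u k) (W w)"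
    unfolding lam_Suc mu_Suc by (simp add: inner_add_left inner_diff_left algebra_simps)
  finally show ?thesis by simp
qed

lemma u_sq_le_inner_s:
  assumes "1 \<le> k"
  shows "c0 * (norm (u (Suc k)))\<^sup>2 \<le> \<rho>2 * inner (s (Suc k)) (u (Suc k))"
proof -
  have "F (ys (Suc k)) + inner (mu (Suc k)) (ys k - ys (Suc k)) + c0/2 * (norm (ys k - ys (Suc k)))\<^sup>2 \<le> F (ys k)"
    using mu_strong_subgradient f_ys assms by simp
  moreover have "F (ys k) + inner (mu k) (ys (Suc k) - ys k) + c0/2 * (norm (ys (Suc k) - ys k))\<^sup>2 \<le> F (ys (Suc k))"
    using mu_strong_subgradient f_ys assms by simp
  moreover have "inner (mu (Suc k)) (ys k - ys (Suc k)) + inner (mu k) (ys (Suc k) - ys k)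
      = - \<rho>2 * inner (s (Suc k)) (u (Suc k))"
    unfolding mu_Suc u_def by (simp add: inner_add_left inner_diff_right algebra_simps)
  ultimately show ?thesis unfolding u_def by (simp add: norm_minus_commute algebra_simps)
qed

text \<open>Testing the optimality of consecutive \<open>x\<close>-steps with \<open>w = x\<^sub>k\<^sub>+\<^sub>1 - x\<^sub>k\<close> and expanding
  the inner products into squared norms gives an energy identity; strong monotonicity controls
  the remaining cross term \<open>\<langle>s\<^sub>k\<^sub>+\<^sub>1, u\<^sub>k\<^sub>+\<^sub>1\<rangle>\<close>.\<close>
lemma E_Suc_le:
  assumes "1 \<le> k"
  shows "E (Suc k) + \<rho>2 * (norm (Wstep k - u k))\<^sup>2 + 2 * c0 * (norm (u (Suc k)))\<^sup>2 \<le> E k"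
proof -
  let ?r = "r k" and ?r' = "r (Suc k)" and ?s = "s k" and ?s' = "s (Suc k)" and ?u = "u k" and ?u' = "u (Suc k)"
  have "xs (Suc k) - xs k \<in> D"
    using W xs_in_D assms unfolding dd_closed_linear_op_def by (simp add: subspace_diff)
  moreover have "A (xs (Suc k) - xs k) = ?r' - ?r" by (simp add: A_diff r_def)
  moreover have "W (xs (Suc k) - xs k) = ?s' - ?s + ?u'"
    using dd_closed_linear_op_diff[OF W] xs_in_D assms Wstep_eq unfolding Wstep_def by simp
  ultimately have orth: "\<rho>1 * inner ?r' (?r' - ?r) + \<rho>2 * inner (?s' + ?u' - ?u) (?s' - ?s + ?u') = 0"
    using increment_orthogonality[OF assms] by metis
  have r_id: "2 * inner ?r' (?r' - ?r) = (norm ?r')\<^sup>2 - (norm ?r)\<^sup>2 + (norm (?r' - ?r))\<^sup>2"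
    unfolding power2_norm_eq_inner by (simp add: inner_diff_left inner_diff_right inner_commute)
  have su_id: "2 * inner (?s' + ?u' - ?u) (?s' - ?s + ?u')
      = (norm ?s')\<^sup>2 - (norm ?s)\<^sup>2 + (norm ?u')\<^sup>2 - (norm ?u)\<^sup>2 + (norm (?s' - ?s + ?u' - ?u))\<^sup>2 + 2 * inner ?s' ?u'"
    unfolding power2_norm_eq_inner
    by (simp add: inner_diff_left inner_diff_right inner_add_left inner_add_right inner_commute algebra_simps)
  have "0 = \<rho>1 * (2 * inner ?r' (?r' - ?r)) + \<rho>2 * (2 * inner (?s' + ?u' - ?u) (?s' - ?s + ?u'))"
    using orth by (simp add: algebra_simps)
  also have "\<dots> = \<rho>1 * ((norm ?r')\<^sup>2 - (norm ?r)\<^sup>2 + (norm (?r' - ?r))\<^sup>2) + \<rho>2 * ((norm ?s')\<^sup>2 - (norm ?s)\<^sup>2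
      + (norm ?u')\<^sup>2 - (norm ?u)\<^sup>2 + (norm (?s' - ?s + ?u' - ?u))\<^sup>2 + 2 * inner ?s' ?u')"
    by (simp only: r_id su_id)
  finally have energy: "0 = \<dots>" .
  have "0 \<le> \<rho>1 * (norm (?r' - ?r))\<^sup>2" using \<rho>1 by simp
  then have "\<rho>1 * (norm ?r')\<^sup>2 + \<rho>2 * (norm ?s')\<^sup>2 + \<rho>2 * (norm ?u')\<^sup>2 + \<rho>2 * (norm (?s' - ?s + ?u' - ?u))\<^sup>2
      + 2 * \<rho>2 * inner ?s' ?u' \<le> \<rho>1 * (norm ?r)\<^sup>2 + \<rho>2 * (norm ?s)\<^sup>2 + \<rho>2 * (norm ?u)\<^sup>2"
    using energy by (simp add: algebra_simps)
  moreover have "2 * c0 * (norm ?u')\<^sup>2 \<le> 2 * \<rho>2 * inner ?s' ?u'"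
    using u_sq_le_inner_s[OF assms] by simp
  ultimately show ?thesis unfolding E_eq Wstep_eq by linarith
qed

lemma E_antimono:
  assumes "1 \<le> i" and "i \<le> j"
  shows "E j \<le> E i"
  using assms(2)
proof (induction j rule: dec_induct)
  case (step j)
  have "0 \<le> \<rho>2 * (norm (Wstep j - u j))\<^sup>2" "0 \<le> 2 * c0 * (norm (u (Suc j)))\<^sup>2"
    using c0 \<rho>2 by simp_all
  then have "E (Suc j) \<le> E j" using E_Suc_le[of j] step.hyps assms(1) by linarith
  then show ?case using step.IH by simp
qed simp

end

section \<open>Stopping by the discrepancy principle\<close>

lemma max_power2_nonneg:
  fixes a b :: real
  assumes "0 \<le> a" and "0 \<le> b"
  shows "max (a\<^sup>2) (b\<^sup>2) = (max a b)\<^sup>2"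
  using assms by (cases "a \<le> b") (simp_all add: max_def power_mono)

lemma residual_noise_bound_above_discrepancy:
  fixes \<rho>1 \<rho>2 \<tau> \<delta> a b :: real
  assumes "\<rho>1 > 0" and "\<rho>2 > 0" and "\<tau> > 0" and "\<delta> > 0" and "a \<ge> 0"
    and above: "max (\<rho>1\<^sup>2) (\<rho>2\<^sup>2) * \<tau>\<^sup>2 * \<delta>\<^sup>2 < \<rho>1\<^sup>2 * a\<^sup>2 + \<rho>2\<^sup>2 * b\<^sup>2"
  shows "\<rho>1 * a * \<delta> * \<tau> \<le> \<rho>1 * a\<^sup>2 + \<rho>2 * b\<^sup>2"
proof -
  define M where "M = max \<rho>1 \<rho>2"
  define P where "P = \<rho>1\<^sup>2 * a\<^sup>2 + \<rho>2\<^sup>2 * b\<^sup>2"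
  have "M > 0" "\<rho>1 \<le> M" "\<rho>2 \<le> M" using assms(1,2) by (auto simp: M_def)
  have "(M * \<tau> * \<delta>)\<^sup>2 < P"
    using above max_power2_nonneg[of \<rho>1 \<rho>2] assms(1,2) unfolding M_def P_def by (simp add: power_mult_distrib)
  moreover have "(\<rho>1 * a)\<^sup>2 \<le> P" unfolding P_def by (simp add: power_mult_distrib)
  moreover have "0 \<le> P" unfolding P_def by simp
  ultimately have "(\<rho>1 * a * (M * \<tau> * \<delta>))\<^sup>2 \<le> P\<^sup>2"
    unfolding power_mult_distrib[of "\<rho>1 * a"] power2_eq_square[of P]
    by (intro mult_mono) (auto simp: power_mult_distrib)
  then have "\<rho>1 * a * (M * \<tau> * \<delta>) \<le> P" using \<open>0 \<le> P\<close> by (rule power2_le_imp_le)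
  also have "P \<le> M * (\<rho>1 * a\<^sup>2 + \<rho>2 * b\<^sup>2)"
  proof -
    have "\<rho>1\<^sup>2 * a\<^sup>2 \<le> M * \<rho>1 * a\<^sup>2" "\<rho>2\<^sup>2 * b\<^sup>2 \<le> M * \<rho>2 * b\<^sup>2"
      using \<open>\<rho>1 \<le> M\<close> \<open>\<rho>2 \<le> M\<close> assms(1,2) by (auto simp: power2_eq_square intro!: mult_right_mono)
    then show ?thesis unfolding P_def by (simp add: algebra_simps)
  qed
  finally have "M * (\<rho>1 * a * \<delta> * \<tau>) \<le> M * (\<rho>1 * a\<^sup>2 + \<rho>2 * b\<^sup>2)" by (simp add: algebra_simps)
  then show ?thesis using \<open>M > 0\<close> by simp
qed

lemma residual_noise_bound_below_discrepancy:
  fixes \<rho>1 \<rho>2 \<tau> \<delta> a b :: real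
  assumes "\<rho>1 > 0" and "\<rho>2 > 0" and "\<tau> > 0" and "\<delta> > 0" and "a \<ge> 0"
    and below: "\<rho>1\<^sup>2 * a\<^sup>2 + \<rho>2\<^sup>2 * b\<^sup>2 \<le> max (\<rho>1\<^sup>2) (\<rho>2\<^sup>2) * \<tau>\<^sup>2 * \<delta>\<^sup>2"
  shows "\<rho>1 * a * \<delta> \<le> max \<rho>1 \<rho>2 * \<tau> * \<delta>\<^sup>2"
proof -
  have "\<rho>1\<^sup>2 * a\<^sup>2 \<le> max (\<rho>1\<^sup>2) (\<rho>2\<^sup>2) * \<tau>\<^sup>2 * \<delta>\<^sup>2"
    using below by (smt (verit) mult_nonneg_nonneg zero_le_power2)
  then have "(\<rho>1 * a)\<^sup>2 \<le> (max \<rho>1 \<rho>2 * \<tau> * \<delta>)\<^sup>2"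
    using max_power2_nonneg[of \<rho>1 \<rho>2] assms(1,2) by (simp add: power_mult_distrib)
  then have "\<rho>1 * a \<le> max \<rho>1 \<rho>2 * \<tau> * \<delta>"
    by (rule power2_le_imp_le) (use assms in simp)
  then show ?thesis using \<open>\<delta> > 0\<close> by (simp add: power2_eq_square mult_right_mono)
qed

definition descent_rate :: "real \<Rightarrow> real \<Rightarrow> real \<Rightarrow> real" where
  "descent_rate c0 \<rho>2 \<tau> = min (c0 / (2 * \<rho>2)) (1 - 1 / \<tau>)"

lemma descent_rate_pos: "c0 > 0 \<Longrightarrow> \<rho>2 > 0 \<Longrightarrow> \<tau> > 1 \<Longrightarrow> 0 < descent_rate c0 \<rho>2 \<tau>"
  by (simp add: descent_rate_def field_simps)

definition admm_constant :: "real \<Rightarrow> real \<Rightarrow> real \<Rightarrow> real" where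
  "admm_constant c0 \<rho>2 \<tau> = 5 + \<rho>2 + 3 * \<rho>2 / (4 * c0) + (4 + \<rho>2 / c0) / (2 * descent_rate c0 \<rho>2 \<tau>)"

lemma admm_constant_pos: "c0 > 0 \<Longrightarrow> \<rho>2 > 0 \<Longrightarrow> \<tau> > 1 \<Longrightarrow> 0 < admm_constant c0 \<rho>2 \<tau>"
  using descent_rate_pos[of c0 \<rho>2 \<tau>] unfolding admm_constant_def
  by (intro add_pos_nonneg) (simp_all add: add_nonneg_nonneg)

locale admm_discrepancy_stopped = admm_iteration +
  fixes b and \<tau> \<delta> :: real and n :: nat and xh
  assumes \<tau>: "\<tau> > 1" and \<delta>: "\<delta> > 0" and noise: "norm (b\<delta> - b) \<le> \<delta>"
    and stopped: "\<rho>1\<^sup>2 * (norm (A (xs n) - b\<delta>))\<^sup>2 + \<rho>2\<^sup>2 * (norm (W (xs n) - ys n))\<^sup>2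
      \<le> max (\<rho>1\<^sup>2) (\<rho>2\<^sup>2) * \<tau>\<^sup>2 * \<delta>\<^sup>2"
    and not_stopped: "\<And>k. 1 \<le> k \<Longrightarrow> k < n \<Longrightarrow> max (\<rho>1\<^sup>2) (\<rho>2\<^sup>2) * \<tau>\<^sup>2 * \<delta>\<^sup>2
      < \<rho>1\<^sup>2 * (norm (A (xs k) - b\<delta>))\<^sup>2 + \<rho>2\<^sup>2 * (norm (W (xs k) - ys k))\<^sup>2"
    and xh: "xh \<in> D" and A_xh: "A xh = b" and f_W_xh: "f (W xh) \<noteq> \<infinity>"
begin

abbreviation \<eta> :: real where "\<eta> \<equiv> descent_rate c0 \<rho>2 \<tau>"

lemma \<eta>_pos: "\<eta> > 0"
  using descent_rate_pos[OF c0 \<rho>2 \<tau>] .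

definition breg :: "nat \<Rightarrow> real" where
  "breg k = F (W xh) - F (ys k) - inner (mu k) (W xh - ys k)"
definition breg_step :: "nat \<Rightarrow> real" where
  "breg_step k = F (ys (Suc k)) - F (ys k) - inner (mu k) (u (Suc k))"
definition descent :: "nat \<Rightarrow> real" where
  "descent k = - breg_step k - \<rho>2 * (norm (s (Suc k)))\<^sup>2 - \<rho>1 * (norm (r (Suc k)))\<^sup>2
    + \<rho>1 * inner (r (Suc k)) (b - b\<delta>)"
definition w where "w k = W xh - W (xs k)"

lemma f_W_xh_eq: "f (W xh) = ereal (F (W xh))"
  using f_W_xh proper unfolding proper_fun_def F_def by (cases "f (W xh)") auto

lemma residual_noise_le: "\<bar>inner (r k) (b - b\<delta>)\<bar> \<le> norm (r k) * \<delta>"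
proof -
  have "\<bar>inner (r k) (b - b\<delta>)\<bar> \<le> norm (r k) * norm (b - b\<delta>)" by (rule Cauchy_Schwarz_ineq2)
  also have "\<dots> \<le> norm (r k) * \<delta>" using noise by (simp add: norm_minus_commute mult_left_mono)
  finally show ?thesis .
qed

lemma residual_noise_le_before_stop:
  assumes "1 \<le> k" and "k < n"
  shows "\<rho>1 * norm (r k) * \<delta> \<le> (\<rho>1 * (norm (r k))\<^sup>2 + \<rho>2 * (norm (s k))\<^sup>2) / \<tau>"
  using residual_noise_bound_above_discrepancy[OF \<rho>1 \<rho>2 _ \<delta> norm_ge_zero not_stopped[OF assms, folded r_def s_def]] \<tau>
  by (simp add: pos_le_divide_eq)

lemma residual_noise_le_at_stop: "\<rho>1 * norm (r n) * \<delta> \<le> max \<rho>1 \<rho>2 * \<tau> * \<delta>\<^sup>2"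
  using residual_noise_bound_below_discrepancy[OF \<rho>1 \<rho>2 _ \<delta> norm_ge_zero stopped[folded r_def s_def]] \<tau> by simp

lemma breg_step_ge: "1 \<le> k \<Longrightarrow> c0/2 * (norm (u (Suc k)))\<^sup>2 \<le> breg_step k"
  using mu_strong_subgradient[of k "ys (Suc k)"] f_ys[of "Suc k"] unfolding breg_step_def u_def by simp

lemma descent_le:
  assumes "1 \<le> k"
  shows "descent k \<le> \<rho>1 * norm (r (Suc k)) * \<delta> - (\<rho>1 * (norm (r (Suc k)))\<^sup>2 + \<rho>2 * (norm (s (Suc k)))\<^sup>2)
    - c0/2 * (norm (u (Suc k)))\<^sup>2"
proof -
  have "\<rho>1 * inner (r (Suc k)) (b - b\<delta>) \<le> \<rho>1 * (norm (r (Suc k)) * \<delta>)"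
    using residual_noise_le[of "Suc k"] \<rho>1 by (intro mult_left_mono) auto
  then show ?thesis using breg_step_ge[OF assms] unfolding descent_def by simp
qed

text \<open>Before the stopping index the noise term is dominated by the residual, which leaves
  the fraction \<open>1 - 1/\<tau>\<close> of it; this is where \<open>\<tau> > 1\<close> enters.\<close>
lemma descent_le_before_stop:
  assumes "1 \<le> k" and "Suc k < n"
  shows "descent k \<le> - \<eta> * E (Suc k)"
proof -
  define X where "X = \<rho>1 * (norm (r (Suc k)))\<^sup>2 + \<rho>2 * (norm (s (Suc k)))\<^sup>2"
  define U where "U = (norm (u (Suc k)))\<^sup>2"
  have "0 \<le> X" "0 \<le> U" using \<rho>1 \<rho>2 unfolding X_def U_def by simp_all
  have "\<rho>1 * norm (r (Suc k)) * \<delta> \<le> X / \<tau>"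
    using residual_noise_le_before_stop[of "Suc k"] assms unfolding X_def by simp
  moreover have "\<eta> * X \<le> (1 - 1/\<tau>) * X"
    using \<open>0 \<le> X\<close> unfolding descent_rate_def by (intro mult_right_mono) auto
  moreover have "\<eta> * \<rho>2 * U \<le> c0/2 * U"
  proof -
    have "\<eta> * \<rho>2 \<le> c0 / (2 * \<rho>2) * \<rho>2"
      using \<rho>2 unfolding descent_rate_def by (intro mult_right_mono) auto
    then show ?thesis using \<rho>2 \<open>0 \<le> U\<close> by (intro mult_right_mono) auto
  qed
  moreover have "\<eta> * E (Suc k) = \<eta> * X + \<eta> * \<rho>2 * U"
    unfolding E_eq X_def U_def by (simp add: algebra_simps)
  moreover have "X / \<tau> = X - (1 - 1/\<tau>) * X" by (simp add: algebra_simps)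
  ultimately show ?thesis using descent_le[OF assms(1)] unfolding X_def U_def by linarith
qed

lemma descent_le_at_stop:
  assumes "1 \<le> k" and "Suc k = n"
  shows "descent k \<le> max \<rho>1 \<rho>2 * \<tau> * \<delta>\<^sup>2"
proof -
  have "0 \<le> \<rho>1 * (norm (r (Suc k)))\<^sup>2 + \<rho>2 * (norm (s (Suc k)))\<^sup>2" "0 \<le> c0/2 * (norm (u (Suc k)))\<^sup>2"
    using \<rho>1 \<rho>2 c0 by simp_all
  then show ?thesis using descent_le[OF assms(1)] residual_noise_le_at_stop[folded assms(2)] by linarith
qed

lemma W_xh_minus: "1 \<le> k \<Longrightarrow> W (xh - xs k) = w k"
  using dd_closed_linear_op_diff[OF W xh xs_in_D] unfolding w_def .

lemma xh_minus_in_D: "1 \<le> k \<Longrightarrow> xh - xs k \<in> D"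
  using W xh xs_in_D unfolding dd_closed_linear_op_def by (simp add: subspace_diff)

lemma w_diff_Suc: "w k - w (Suc k) = Wstep k"
  by (simp add: w_def Wstep_def)

text \<open>Testing the optimality of the \<open>x\<close>-step with \<open>x\<^sub>h - x\<^sub>k\<^sub>+\<^sub>1\<close> turns the change of the
  Bregman distance into \<open>descent\<close> plus cross terms between \<open>u\<close> and \<open>w\<close>.\<close>
lemma breg_Suc:
  assumes "1 \<le> k"
  shows "breg (Suc k) - \<rho>2 * inner (u (Suc k)) (w (Suc k))
    = breg k + descent k - \<rho>2 * inner (u k) (w (Suc k))"
proof -
  have "A (xh - xs (Suc k)) = (b - b\<delta>) - r (Suc k)" by (simp add: A_diff A_xh r_def)
  then have orth: "\<rho>1 * inner (r (Suc k)) ((b - b\<delta>) - r (Suc k))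
      + \<rho>2 * inner (s (Suc k) + u (Suc k) - u k) (w (Suc k)) = 0"
    using increment_orthogonality[OF assms xh_minus_in_D[of "Suc k"]] W_xh_minus[of "Suc k"] by simp
  have "inner (mu (Suc k)) (W xh - ys (Suc k))
      = inner (mu k) (W xh - ys (Suc k)) + \<rho>2 * inner (s (Suc k)) (W xh - ys (Suc k))"
    unfolding mu_Suc by (simp add: inner_add_left)
  moreover have "inner (mu k) (W xh - ys (Suc k)) = inner (mu k) (W xh - ys k) - inner (mu k) (u (Suc k))"
    by (simp add: u_def inner_diff_right)
  moreover have "W xh - ys (Suc k) = w (Suc k) + s (Suc k)" by (simp add: w_def s_def)
  then have "inner (s (Suc k)) (W xh - ys (Suc k)) = inner (s (Suc k)) (w (Suc k)) + (norm (s (Suc k)))\<^sup>2"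
    by (simp add: inner_add_right power2_norm_eq_inner)
  moreover have "\<rho>2 * inner (s (Suc k)) (w (Suc k)) = - \<rho>1 * inner (r (Suc k)) (b - b\<delta>) + \<rho>1 * (norm (r (Suc k)))\<^sup>2
      - \<rho>2 * inner (u (Suc k)) (w (Suc k)) + \<rho>2 * inner (u k) (w (Suc k))"
    using orth unfolding power2_norm_eq_inner
    by (simp add: inner_diff_left inner_diff_right inner_add_left algebra_simps)
  ultimately show ?thesis by (simp add: breg_def breg_step_def descent_def algebra_simps)
qed

text \<open>The Lyapunov quantity whose decrease drives the first estimate.\<close>
definition Phi :: "nat \<Rightarrow> real" where "Phi k = breg k - \<rho>2 * inner (u k) (w k)"

lemma Phi_Suc: "1 \<le> k \<Longrightarrow> Phi (Suc k) = Phi k + descent k + \<rho>2 * inner (u k) (Wstep k)"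
  using breg_Suc unfolding Phi_def w_diff_Suc[symmetric] by (simp add: inner_diff_right algebra_simps)

lemma u_sq_le:
  assumes "2 \<le> k"
  shows "2 * c0 * (norm (u k))\<^sup>2 \<le> E (k - 1) - E k"
proof -
  obtain j where k: "k = Suc j" and "1 \<le> j" using assms by (cases k) auto
  have "0 \<le> \<rho>2 * (norm (Wstep j - u j))\<^sup>2" using \<rho>2 by simp
  then show ?thesis using E_Suc_le[OF \<open>1 \<le> j\<close>] unfolding k by simp
qed

lemma Wstep_minus_u_sq_le:
  assumes "1 \<le> k"
  shows "\<rho>2 * (norm (Wstep k - u k))\<^sup>2 \<le> E k - E (Suc k)"
proof -
  have "0 \<le> 2 * c0 * (norm (u (Suc k)))\<^sup>2" using c0 by simp
  then show ?thesis using E_Suc_le[OF assms] by linarith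
qed

text \<open>The coefficients of the potentials \<open>G\<close> and \<open>V\<close> come from splitting \<open>Wstep k = (Wstep k - u k) + u k\<close>
  and bounding the two parts by the energy decrements in \<open>Wstep_minus_u_sq_le\<close> and \<open>u_sq_le\<close>.\<close>
definition G :: "nat \<Rightarrow> real" where "G k = 3 * \<rho>2 / (4 * c0) * E (k - 1) + E k / 2"
definition V :: "nat \<Rightarrow> real" where "V k = 2 * E k + \<rho>2 / c0 * E (k - 1)"

lemma cross_term_le:
  assumes "2 \<le> k"
  shows "\<rho>2 * inner (u k) (Wstep k) \<le> G k - G (Suc k)"
proof -
  define g where "g = Wstep k - u k"
  have "inner (u k) (Wstep k) = inner (u k) g + (norm (u k))\<^sup>2"
    by (simp add: g_def inner_diff_right power2_norm_eq_inner)
  also have "\<dots> \<le> 3/2 * (norm (u k))\<^sup>2 + 1/2 * (norm g)\<^sup>2"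
    using abs_le_D1[OF abs_inner_le_half_sum_squares[of "u k" g]] by simp
  finally have "\<rho>2 * inner (u k) (Wstep k) \<le> \<rho>2 * (3/2 * (norm (u k))\<^sup>2 + 1/2 * (norm g)\<^sup>2)"
    using \<rho>2 by (intro mult_left_mono) auto
  then have "\<rho>2 * inner (u k) (Wstep k) \<le> \<rho>2 * (3/2 * (norm (u k))\<^sup>2) + 1/2 * (\<rho>2 * (norm g)\<^sup>2)"
    by (simp add: algebra_simps)
  moreover have "\<rho>2 * (3/2 * (norm (u k))\<^sup>2) \<le> 3 * \<rho>2 / (4 * c0) * (E (k - 1) - E k)"
  proof -
    have "\<rho>2 * (3/2 * (norm (u k))\<^sup>2) = 3 * \<rho>2 / (4 * c0) * (2 * c0 * (norm (u k))\<^sup>2)" using c0 by simp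
    also have "\<dots> \<le> 3 * \<rho>2 / (4 * c0) * (E (k - 1) - E k)"
      using u_sq_le[OF assms] \<rho>2 c0 by (intro mult_left_mono) auto
    finally show ?thesis .
  qed
  moreover have "\<rho>2 * (norm g)\<^sup>2 \<le> E k - E (Suc k)" using Wstep_minus_u_sq_le assms unfolding g_def by simp
  ultimately show ?thesis unfolding G_def by (simp add: right_diff_distrib)
qed

lemma Wstep_sq_le_split:
  "\<rho>2 * (norm (Wstep k))\<^sup>2 \<le> 2 * (\<rho>2 * (norm (Wstep k - u k))\<^sup>2) + 2 * (\<rho>2 * (norm (u k))\<^sup>2)"
proof -
  have "\<rho>2 * (norm (Wstep k))\<^sup>2 \<le> \<rho>2 * (2 * (norm (Wstep k - u k))\<^sup>2 + 2 * (norm (u k))\<^sup>2)"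
    using norm_add_squared_le[of "Wstep k - u k" "u k"] \<rho>2 by (intro mult_left_mono) auto
  then show ?thesis by (simp add: algebra_simps)
qed

lemma Wstep_sq_le_first:
  "1 \<le> k \<Longrightarrow> \<rho>2 * (norm (Wstep k))\<^sup>2 \<le> 4 * E k - 2 * E (Suc k)"
  using Wstep_sq_le_split[of k] Wstep_minus_u_sq_le[of k] E_ge_u[of k] by linarith

lemma Wstep_sq_le:
  assumes "2 \<le> k"
  shows "\<rho>2 * (norm (Wstep k))\<^sup>2 \<le> V k - V (Suc k)"
proof -
  have "2 * (\<rho>2 * (norm (u k))\<^sup>2) = \<rho>2 / c0 * (2 * c0 * (norm (u k))\<^sup>2)" using c0 by simp
  also have "\<dots> \<le> \<rho>2 / c0 * (E (k - 1) - E k)"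
    using u_sq_le[OF assms] \<rho>2 c0 by (intro mult_left_mono) auto
  finally have "2 * (\<rho>2 * (norm (u k))\<^sup>2) \<le> \<rho>2 / c0 * E (k - 1) - \<rho>2 / c0 * E k"
    by (simp add: right_diff_distrib)
  then show ?thesis
    using Wstep_sq_le_split[of k] Wstep_minus_u_sq_le[of k] assms unfolding V_def by simp
qed

section \<open>The Bregman estimate\<close>

lemma Phi_le:
  assumes "1 \<le> m" and "m + 1 < n"
  shows "Phi n + \<eta> * real (n - 1 - m) * E n
    \<le> breg m - \<rho>2 * inner (u m) (w (Suc m)) + G (Suc m) - G n + max \<rho>1 \<rho>2 * \<tau> * \<delta>\<^sup>2"
proof -
  have E_n_le: "\<eta> * E n \<le> \<eta> * E (Suc q)" if "Suc q \<le> n" for q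
    using E_antimono[OF _ that] \<eta>_pos by (simp add: mult_left_mono)
  have first: "Phi (Suc m) \<le> breg m - \<rho>2 * inner (u m) (w (Suc m)) - \<eta> * E n"
    using breg_Suc[OF assms(1)] descent_le_before_stop[OF assms(1)] E_n_le[of m] assms(2)
    unfolding Phi_def by simp
  obtain p where n: "n = Suc p" and "2 \<le> p" using assms by (cases n) auto
  have middle: "Phi p \<le> Phi (Suc m) + real (p - Suc m) * (- \<eta> * E n) + (G (Suc m) - G p)"
  proof (rule telescoping_increments_bound)
    fix q assume q: "Suc m \<le> q" "q < p"
    then have "1 \<le> q" "descent q \<le> - \<eta> * E (Suc q)" "\<rho>2 * inner (u q) (Wstep q) \<le> G q - G (Suc q)"
        "\<eta> * E n \<le> \<eta> * E (Suc q)"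
      using descent_le_before_stop cross_term_le E_n_le assms n by simp_all
    then show "Phi (Suc q) \<le> Phi q + - \<eta> * E n + (G q - G (Suc q))"
      using Phi_Suc by simp
  qed (use assms n in simp)
  have last: "Phi n \<le> Phi p + max \<rho>1 \<rho>2 * \<tau> * \<delta>\<^sup>2 + (G p - G n)"
    using Phi_Suc[of p] descent_le_at_stop[of p] cross_term_le[of p] \<open>2 \<le> p\<close> n by simp
  have "p - m = Suc (p - Suc m)" using assms n by simp
  then have "\<eta> * real (n - 1 - m) * E n = \<eta> * E n + real (p - Suc m) * (\<eta> * E n)"
    using n by (simp add: algebra_simps)
  then show ?thesis using first middle last by simp
qed

lemma u_Wstep_le: "- \<rho>2 * inner (u n) (Wstep q) \<le> \<eta>/2 * E n + \<rho>2 * (norm (Wstep q))\<^sup>2 / (2 * \<eta>)"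
proof -
  have "inner (- u n) (Wstep q) \<le> \<eta>/2 * (norm (- u n))\<^sup>2 + (norm (Wstep q))\<^sup>2 / (4 * (\<eta>/2))"
    using \<eta>_pos by (intro inner_le_weighted_squares) simp
  then have "\<rho>2 * inner (- u n) (Wstep q) \<le> \<rho>2 * (\<eta>/2 * (norm (u n))\<^sup>2 + (norm (Wstep q))\<^sup>2 / (2 * \<eta>))"
    using \<rho>2 by (intro mult_left_mono) auto
  moreover have "\<eta>/2 * (\<rho>2 * (norm (u n))\<^sup>2) \<le> \<eta>/2 * E n"
    using E_ge_u \<eta>_pos by (intro mult_left_mono) auto
  ultimately show ?thesis by (simp add: algebra_simps)
qed

text \<open>Moves the cross term \<open>\<langle>u\<^sub>n, w\<^sub>n\<rangle>\<close> back to \<open>\<langle>u\<^sub>n, w\<^sub>m\<rangle>\<close>; the price, one \<open>\<eta>/2\<close> per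
  step, is paid out of the decrease \<open>\<eta> E\<^sub>n\<close> per step in \<open>Phi_le\<close>.\<close>
lemma u_w_tail_le:
  assumes "1 \<le> m" and "m + 1 < n"
  shows "- \<rho>2 * inner (u n) (w m - w n) \<le> real (n - m) * (\<eta>/2 * E n) + (4 + \<rho>2/c0) / (2 * \<eta>) * E m"
proof -
  define a where "a q = - \<rho>2 * inner (u n) (w m - w q)" for q
  have a_Suc: "a (Suc q) = a q - \<rho>2 * inner (u n) (Wstep q)" for q
    unfolding a_def w_diff_Suc[symmetric] by (simp add: inner_diff_right algebra_simps)
  have first: "a (Suc m) \<le> \<eta>/2 * E n + (4 * E m - 2 * E (Suc m)) / (2 * \<eta>)"
  proof -
    have "\<rho>2 * (norm (Wstep m))\<^sup>2 / (2 * \<eta>) \<le> (4 * E m - 2 * E (Suc m)) / (2 * \<eta>)"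
      using Wstep_sq_le_first[OF assms(1)] \<eta>_pos by (simp add: divide_right_mono)
    then show ?thesis using u_Wstep_le[of m] unfolding a_Suc by (simp add: a_def)
  qed
  have rest: "a n \<le> a (Suc m) + real (n - Suc m) * (\<eta>/2 * E n) + (V (Suc m) / (2 * \<eta>) - V n / (2 * \<eta>))"
  proof (rule telescoping_increments_bound)
    fix q assume "Suc m \<le> q" "q < n"
    then have "\<rho>2 * (norm (Wstep q))\<^sup>2 / (2 * \<eta>) \<le> (V q - V (Suc q)) / (2 * \<eta>)"
      using Wstep_sq_le assms \<eta>_pos by (simp add: divide_right_mono)
    then show "a (Suc q) \<le> a q + \<eta>/2 * E n + (V q / (2 * \<eta>) - V (Suc q) / (2 * \<eta>))"
      using u_Wstep_le[of q] unfolding a_Suc by (simp add: diff_divide_distrib)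
  qed (use assms in simp)
  have "V (Suc m) = 2 * E (Suc m) + \<rho>2/c0 * E m" "0 \<le> V n"
    using E_nonneg \<rho>2 c0 unfolding V_def by simp_all
  then have "(4 * E m - 2 * E (Suc m)) / (2 * \<eta>) + (V (Suc m) / (2 * \<eta>) - V n / (2 * \<eta>))
      \<le> (4 + \<rho>2/c0) / (2 * \<eta>) * E m"
    using \<eta>_pos by (simp add: field_simps)
  moreover have "real (n - m) = 1 + real (n - Suc m)" using assms by linarith
  then have "real (n - m) * (\<eta>/2 * E n) = \<eta>/2 * E n + real (n - Suc m) * (\<eta>/2 * E n)"
    by (simp only: distrib_right mult_1_left)
  ultimately show ?thesis using first rest unfolding a_def by linarith
qed

lemma breg_le:
  assumes "1 \<le> m" and "m + 1 < n"
  shows "breg n + E n \<le> breg m + max \<rho>1 \<rho>2 * \<tau> * \<delta>\<^sup>2 + \<rho>2 * \<bar>inner (u m) (w (Suc m))\<bar>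
    + \<rho>2/2 * (norm (w m))\<^sup>2 + (3 * \<rho>2 / (4 * c0) + 2 + (4 + \<rho>2/c0) / (2 * \<eta>)) * E m"
proof -
  have "breg n = Phi n + \<rho>2 * inner (u n) (w m) + - \<rho>2 * inner (u n) (w m - w n)"
    unfolding Phi_def by (simp add: inner_diff_right algebra_simps)
  moreover have "\<rho>2 * inner (u n) (w m) \<le> E n / 2 + \<rho>2/2 * (norm (w m))\<^sup>2"
  proof -
    have "\<rho>2 * inner (u n) (w m) \<le> \<rho>2 * (((norm (u n))\<^sup>2 + (norm (w m))\<^sup>2) / 2)"
      using abs_le_D1[OF abs_inner_le_half_sum_squares] \<rho>2 by (intro mult_left_mono) auto
    then show ?thesis using E_ge_u[of n] by (simp add: algebra_simps)
  qed
  moreover have "real (n - m) * (\<eta>/2 * E n) \<le> \<eta> * real (n - 1 - m) * E n"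
  proof -
    have "real (n - m) \<le> 2 * real (n - 1 - m)" using assms by linarith
    then have "real (n - m) * (\<eta>/2 * E n) \<le> 2 * real (n - 1 - m) * (\<eta>/2 * E n)"
      using \<eta>_pos E_nonneg[of n] by (intro mult_right_mono) auto
    then show ?thesis by (simp add: algebra_simps)
  qed
  moreover have "- \<rho>2 * inner (u m) (w (Suc m)) \<le> \<rho>2 * \<bar>inner (u m) (w (Suc m))\<bar>"
    using mult_left_mono[OF abs_ge_minus_self, of \<rho>2] \<rho>2 by simp
  moreover have "G (Suc m) \<le> 3 * \<rho>2 / (4 * c0) * E m + E m / 2" "0 \<le> G n"
    using E_antimono[OF assms(1), of "Suc m"] E_nonneg \<rho>2 c0 unfolding G_def by simp_all
  moreover have "E n \<le> E m" using E_antimono assms by simp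
  ultimately show ?thesis
    using Phi_le[OF assms] u_w_tail_le[OF assms] by (simp add: algebra_simps)
qed

section \<open>The multiplier estimate\<close>

lemma residual_noise_le_E_before_stop: "1 \<le> k \<Longrightarrow> k < n \<Longrightarrow> \<rho>1 * norm (r k) * \<delta> \<le> E k"
proof -
  assume "1 \<le> k" "k < n"
  define X where "X = \<rho>1 * (norm (r k))\<^sup>2 + \<rho>2 * (norm (s k))\<^sup>2"
  have "0 \<le> X" using \<rho>1 \<rho>2 unfolding X_def by simp
  then have "X / \<tau> \<le> X" using \<tau> by (simp add: divide_le_eq mult_le_cancel_left1)
  moreover have "X \<le> E k" using \<rho>2 unfolding X_def E_eq by simp
  ultimately show ?thesis
    using residual_noise_le_before_stop[OF \<open>1 \<le> k\<close> \<open>k < n\<close>] unfolding X_def by linarith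
qed

text \<open>\<open>gap m q\<close> measures how far \<open>\<langle>\<mu>\<^sub>q, W x\<^sub>h - y\<^sub>n\<rangle>\<close> has moved from \<open>\<langle>\<mu>\<^sub>m, W x\<^sub>h - y\<^sub>n\<rangle>\<close>,
  corrected by the \<open>u\<close>-term that makes its increments small.\<close>
definition gap :: "nat \<Rightarrow> nat \<Rightarrow> real" where
  "gap m q = inner (mu q - mu m) (W xh - ys n) + \<rho>2 * inner (u q - u m) (w n)"

lemma gap_Suc:
  assumes "1 \<le> q" and "1 \<le> n"
  shows "gap m (Suc q) = gap m q + (\<rho>2 * inner (s (Suc q)) (s n) - \<rho>1 * inner (r (Suc q)) ((b - b\<delta>) - r n))"
proof -
  have "A (xh - xs n) = (b - b\<delta>) - r n" by (simp add: A_diff A_xh r_def)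
  then have orth: "\<rho>1 * inner (r (Suc q)) ((b - b\<delta>) - r n) + \<rho>2 * inner (s (Suc q) + u (Suc q) - u q) (w n) = 0"
    using increment_orthogonality[OF assms(1) xh_minus_in_D[OF assms(2)]] W_xh_minus[OF assms(2)] by simp
  have "W xh - ys n = w n + s n" by (simp add: w_def s_def)
  then have "gap m (Suc q) - gap m q = \<rho>2 * inner (s (Suc q)) (s n) + \<rho>2 * inner (s (Suc q) + u (Suc q) - u q) (w n)"
    unfolding gap_def mu_Suc by (simp add: inner_add_left inner_add_right inner_diff_left algebra_simps)
  then show ?thesis using orth by linarith
qed

lemma gap_increment_le:
  "2 * \<bar>\<rho>2 * inner (s (Suc q)) (s n) - \<rho>1 * inner (r (Suc q)) ((b - b\<delta>) - r n)\<bar>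
    \<le> E (Suc q) + E n + 2 * (\<rho>1 * norm (r (Suc q)) * \<delta>)"
proof -
  define \<alpha> where "\<alpha> = \<rho>2 * inner (s (Suc q)) (s n)"
  define \<beta> where "\<beta> = \<rho>1 * inner (r (Suc q)) (b - b\<delta>)"
  define \<gamma> where "\<gamma> = \<rho>1 * inner (r (Suc q)) (r n)"
  have split: "\<rho>2 * inner (s (Suc q)) (s n) - \<rho>1 * inner (r (Suc q)) ((b - b\<delta>) - r n) = \<alpha> - \<beta> + \<gamma>"
    unfolding \<alpha>_def \<beta>_def \<gamma>_def by (simp add: inner_diff_right algebra_simps)
  have "\<bar>\<alpha> - \<beta> + \<gamma>\<bar> \<le> \<bar>\<alpha>\<bar> + \<bar>\<beta>\<bar> + \<bar>\<gamma>\<bar>" by linarith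
  then have "2 * \<bar>\<alpha> - \<beta> + \<gamma>\<bar> \<le> 2 * \<bar>\<alpha>\<bar> + 2 * \<bar>\<beta>\<bar> + 2 * \<bar>\<gamma>\<bar>" by simp
  also have "\<dots> \<le> (\<rho>2 * (norm (s (Suc q)))\<^sup>2 + \<rho>2 * (norm (s n))\<^sup>2) + 2 * (\<rho>1 * norm (r (Suc q)) * \<delta>)
      + (\<rho>1 * (norm (r (Suc q)))\<^sup>2 + \<rho>1 * (norm (r n))\<^sup>2)"
  proof (intro add_mono)
    show "2 * \<bar>\<alpha>\<bar> \<le> \<rho>2 * (norm (s (Suc q)))\<^sup>2 + \<rho>2 * (norm (s n))\<^sup>2"
      unfolding \<alpha>_def using \<rho>2 by (intro abs_scaled_inner_le) simp
    show "2 * \<bar>\<gamma>\<bar> \<le> \<rho>1 * (norm (r (Suc q)))\<^sup>2 + \<rho>1 * (norm (r n))\<^sup>2"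
      unfolding \<gamma>_def using \<rho>1 by (intro abs_scaled_inner_le) simp
    show "2 * \<bar>\<beta>\<bar> \<le> 2 * (\<rho>1 * norm (r (Suc q)) * \<delta>)"
      using residual_noise_le[of "Suc q"] \<rho>1 unfolding \<beta>_def by (simp add: abs_mult mult_left_mono mult.assoc)
  qed
  also have "\<dots> \<le> E (Suc q) + E n + 2 * (\<rho>1 * norm (r (Suc q)) * \<delta>)"
    using E_ge_rs[of "Suc q"] E_ge_rs[of n] by linarith
  finally show ?thesis unfolding split .
qed

lemma gap_le:
  assumes "1 \<le> m" and "m + 1 < n"
  shows "\<bar>gap m n\<bar> \<le> 2 * (\<Sum>k = m..<n - 1. E k) + E n + max \<rho>1 \<rho>2 * \<tau> * \<delta>\<^sup>2"
proof -
  obtain p where n: "Suc p = n" using assms by (cases n) auto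
  have n1: "1 \<le> n" using assms by simp
  have gap_Suc_le: "2 * \<bar>gap m (Suc q)\<bar> \<le> 2 * \<bar>gap m q\<bar> + E (Suc q) + E n + 2 * (\<rho>1 * norm (r (Suc q)) * \<delta>)"
    if "1 \<le> q" for q
  proof -
    have "\<bar>gap m (Suc q)\<bar> \<le> \<bar>gap m q\<bar>
        + \<bar>\<rho>2 * inner (s (Suc q)) (s n) - \<rho>1 * inner (r (Suc q)) ((b - b\<delta>) - r n)\<bar>"
      unfolding gap_Suc[OF that n1] by (rule abs_triangle_ineq)
    then have "2 * \<bar>gap m (Suc q)\<bar> \<le> 2 * \<bar>gap m q\<bar>
        + 2 * \<bar>\<rho>2 * inner (s (Suc q)) (s n) - \<rho>1 * inner (r (Suc q)) ((b - b\<delta>) - r n)\<bar>"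
      by simp
    also have "\<dots> \<le> 2 * \<bar>gap m q\<bar> + (E (Suc q) + E n + 2 * (\<rho>1 * norm (r (Suc q)) * \<delta>))"
      using gap_increment_le[of q] by (rule add_left_mono)
    finally show ?thesis by (simp add: add.assoc)
  qed
  have "\<bar>gap m p\<bar> \<le> \<bar>gap m m\<bar> + (\<Sum>q = m..<p. 2 * E q)"
  proof (rule sum_increments_bound)
    fix q assume q: "m \<le> q" "q < p"
    then have "\<rho>1 * norm (r (Suc q)) * \<delta> \<le> E (Suc q)" "E n \<le> E (Suc q)" "E (Suc q) \<le> E q"
      using residual_noise_le_E_before_stop E_antimono assms n by simp_all
    then show "\<bar>gap m (Suc q)\<bar> \<le> \<bar>gap m q\<bar> + 2 * E q" using gap_Suc_le[of q] q assms by linarith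
  qed (use assms n in simp)
  then have "\<bar>gap m p\<bar> \<le> 2 * (\<Sum>k = m..<p. E k)" by (simp add: gap_def sum_distrib_left)
  moreover have "\<bar>gap m n\<bar> \<le> \<bar>gap m p\<bar> + E n + max \<rho>1 \<rho>2 * \<tau> * \<delta>\<^sup>2"
    using gap_Suc_le[of p] residual_noise_le_at_stop assms n by simp
  moreover have "n - 1 = p" using n by simp
  ultimately show ?thesis by simp
qed

lemma u_diff_inner_le: "2 * \<bar>\<rho>2 * inner (u k - u l) v\<bar> \<le> E k + E l + 2 * (\<rho>2 * (norm v)\<^sup>2)"
proof -
  have "\<rho>2 * inner (u k - u l) v = \<rho>2 * inner (u k) v - \<rho>2 * inner (u l) v"
    by (simp add: inner_diff_left algebra_simps)
  then have "2 * \<bar>\<rho>2 * inner (u k - u l) v\<bar> \<le> 2 * \<bar>\<rho>2 * inner (u k) v\<bar> + 2 * \<bar>\<rho>2 * inner (u l) v\<bar>"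
    using abs_triangle_ineq4[of "\<rho>2 * inner (u k) v" "\<rho>2 * inner (u l) v"] by simp
  also have "\<dots> \<le> (\<rho>2 * (norm (u k))\<^sup>2 + \<rho>2 * (norm v)\<^sup>2) + (\<rho>2 * (norm (u l))\<^sup>2 + \<rho>2 * (norm v)\<^sup>2)"
    by (intro add_mono abs_scaled_inner_le less_imp_le[OF \<rho>2])
  finally show ?thesis using E_ge_u[of k] E_ge_u[of l] by linarith
qed

lemma multiplier_le:
  assumes "1 \<le> m" and "m + 1 < n"
  shows "\<bar>inner (mu n) (W xh - ys n)\<bar> \<le> \<bar>inner (mu m) (W xh - ys n)\<bar> + max \<rho>1 \<rho>2 * \<tau> * \<delta>\<^sup>2
    + 3 * (\<Sum>k = m..n. E k) + \<rho>2 * (norm (w n))\<^sup>2"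
proof -
  obtain p where n: "Suc p = n" using assms by (cases n) auto
  have "\<bar>gap m n\<bar> + \<bar>\<rho>2 * inner (u n - u m) (w n)\<bar>
      \<le> max \<rho>1 \<rho>2 * \<tau> * \<delta>\<^sup>2 + 3 * (\<Sum>k = m..n. E k) + \<rho>2 * (norm (w n))\<^sup>2"
  proof -
    have "2 * \<bar>\<rho>2 * inner (u n - u m) (w n)\<bar> \<le> E n + E m + 2 * (\<rho>2 * (norm (w n))\<^sup>2)"
      by (rule u_diff_inner_le)
    moreover have "n - 1 = p" using n by simp
    then have "\<bar>gap m n\<bar> \<le> 2 * (\<Sum>k = m..<p. E k) + E n + max \<rho>1 \<rho>2 * \<tau> * \<delta>\<^sup>2"
      using gap_le[OF assms] by simp
    moreover have "(\<Sum>k = m..n. E k) = (\<Sum>k = m..<p. E k) + E p + E n"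
    proof -
      have "m \<le> p" using assms n by simp
      then have "(\<Sum>k = m..Suc p. E k) = (\<Sum>k = m..<p. E k) + E p + E (Suc p)"
        by (simp add: atLeastLessThanSuc_atLeastAtMost[symmetric] sum.atLeastLessThan_Suc)
      then show ?thesis unfolding n .
    qed
    moreover have "E m \<le> (\<Sum>k = m..<p. E k)"
      by (rule member_le_sum) (use assms n E_nonneg in auto)
    moreover have "0 \<le> E p" "0 \<le> E n" by (rule E_nonneg)+
    ultimately have "2 * \<bar>gap m n\<bar> + 2 * \<bar>\<rho>2 * inner (u n - u m) (w n)\<bar>
        \<le> 2 * (2 * (\<Sum>k = m..<p. E k) + E n + max \<rho>1 \<rho>2 * \<tau> * \<delta>\<^sup>2) + (E n + E m + 2 * (\<rho>2 * (norm (w n))\<^sup>2))"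
      by (intro add_mono) simp_all
    also have "\<dots> \<le> 2 * (max \<rho>1 \<rho>2 * \<tau> * \<delta>\<^sup>2 + 3 * (\<Sum>k = m..n. E k) + \<rho>2 * (norm (w n))\<^sup>2)"
      using \<open>(\<Sum>k = m..n. E k) = _\<close> \<open>E m \<le> _\<close> \<open>0 \<le> E p\<close> \<open>0 \<le> E n\<close> E_nonneg[of m] by argo
    finally show ?thesis by simp
  qed
  moreover have "inner (mu n) (W xh - ys n) = inner (mu m) (W xh - ys n) + gap m n - \<rho>2 * inner (u n - u m) (w n)"
    by (simp add: gap_def inner_diff_left)
  then have "\<bar>inner (mu n) (W xh - ys n)\<bar>
      \<le> \<bar>inner (mu m) (W xh - ys n)\<bar> + (\<bar>gap m n\<bar> + \<bar>\<rho>2 * inner (u n - u m) (w n)\<bar>)"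
    by linarith
  ultimately show ?thesis by linarith
qed

abbreviation C :: real where "C \<equiv> admm_constant c0 \<rho>2 \<tau>"

lemma C_ge: "3 \<le> C" "\<rho>2 \<le> C" "3 * \<rho>2 / (4 * c0) + 2 + (4 + \<rho>2 / c0) / (2 * \<eta>) \<le> C"
proof -
  have "0 \<le> 3 * \<rho>2 / (4 * c0)" "0 \<le> (4 + \<rho>2 / c0) / (2 * \<eta>)" using c0 \<rho>2 \<eta>_pos by simp_all
  then show "3 \<le> C" "\<rho>2 \<le> C" "3 * \<rho>2 / (4 * c0) + 2 + (4 + \<rho>2 / c0) / (2 * \<eta>) \<le> C"
    using \<rho>2 unfolding admm_constant_def by linarith+
qed

lemma bregman_eq_breg: "1 \<le> k \<Longrightarrow> bregman f (mu k) (W xh) (ys k) = ereal (breg k)"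
  unfolding bregman_def breg_def using f_ys f_W_xh_eq by simp

lemma bregman_estimate:
  assumes "1 \<le> m" and "m + 1 < n"
  shows "bregman f (mu n) (W xh) (ys n) + ereal (1 * admm_E A W \<rho>1 \<rho>2 b\<delta> xs ys n)
    \<le> bregman f (mu m) (W xh) (ys m)
       + ereal (max \<rho>1 \<rho>2 * \<tau> * \<delta>\<^sup>2 + C * (norm (W (xh - xs m)))\<^sup>2 + C * admm_E A W \<rho>1 \<rho>2 b\<delta> xs ys m
         + C * (norm (W (xs m) - ys m))\<^sup>2 + C * \<bar>inner (ys (m - 1) - ys m) (W (xh - xs (Suc m)))\<bar>)"
proof -
  have abs_eq: "\<bar>inner (ys (m - 1) - ys m) (W (xh - xs (Suc m)))\<bar> = \<bar>inner (u m) (w (Suc m))\<bar>"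
  proof -
    have "ys (m - 1) - ys m = - u m" by (simp add: u_def)
    then show ?thesis using W_xh_minus[of "Suc m"] by simp
  qed
  have "\<rho>2 * \<bar>inner (u m) (w (Suc m))\<bar> \<le> C * \<bar>inner (u m) (w (Suc m))\<bar>"
    using C_ge by (intro mult_right_mono) auto
  moreover have "\<rho>2/2 * (norm (w m))\<^sup>2 \<le> C * (norm (w m))\<^sup>2"
    using C_ge \<rho>2 by (intro mult_right_mono) auto
  moreover have "(3 * \<rho>2 / (4 * c0) + 2 + (4 + \<rho>2 / c0) / (2 * \<eta>)) * E m \<le> C * E m"
    using C_ge E_nonneg by (intro mult_right_mono) auto
  moreover have "0 \<le> C * (norm (W (xs m) - ys m))\<^sup>2"
    using C_ge by simp
  ultimately have "breg n + E n \<le> breg m + (max \<rho>1 \<rho>2 * \<tau> * \<delta>\<^sup>2 + C * (norm (w m))\<^sup>2 + C * E m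
      + C * (norm (W (xs m) - ys m))\<^sup>2 + C * \<bar>inner (u m) (w (Suc m))\<bar>)"
    using breg_le[OF assms] by linarith
  moreover have "1 \<le> n" using assms by simp
  ultimately show ?thesis
    unfolding bregman_eq_breg[OF \<open>1 \<le> n\<close>] bregman_eq_breg[OF assms(1)] E_def[symmetric] W_xh_minus[OF assms(1)] abs_eq
    by simp
qed

lemma multiplier_estimate:
  assumes "1 \<le> m" and "m + 1 < n"
  shows "\<bar>inner (mu n) (ys n - W xh)\<bar> \<le> \<bar>inner (mu m) (ys n - W xh)\<bar> + max \<rho>1 \<rho>2 * \<tau> * \<delta>\<^sup>2
    + C * (\<Sum>k = m..n. admm_E A W \<rho>1 \<rho>2 b\<delta> xs ys k) + C * (norm (W (xs n - xh)))\<^sup>2"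
proof -
  have flip: "\<bar>inner v (ys n - W xh)\<bar> = \<bar>inner v (W xh - ys n)\<bar>" for v
  proof -
    have "ys n - W xh = - (W xh - ys n)" by simp
    then show ?thesis by (simp only: inner_minus_right abs_minus_cancel)
  qed
  have "norm (W (xs n - xh)) = norm (w n)"
    using dd_closed_linear_op_diff[OF W xs_in_D xh] assms by (simp add: w_def norm_minus_commute)
  moreover have "3 * (\<Sum>k = m..n. E k) \<le> C * (\<Sum>k = m..n. E k)"
    using C_ge E_nonneg by (intro mult_right_mono sum_nonneg) auto
  moreover have "\<rho>2 * (norm (w n))\<^sup>2 \<le> C * (norm (w n))\<^sup>2"
    using C_ge by (intro mult_right_mono) auto
  ultimately show ?thesis
    using multiplier_le[OF assms] unfolding flip E_def[symmetric] by simp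
qed

end

theorem lemma2p12:
  fixes \<rho>2 \<tau> c0 :: real
  assumes "\<rho>2 > 0" and "\<tau> > 1" and "c0 > 0"
  shows "\<exists>c C :: real. c > 0 \<and> C > 0 \<and>
    (\<forall>(A :: 'x::{real_inner,complete_space} \<Rightarrow> 'h::{real_inner,complete_space})
       (D :: 'x set) (W :: 'x \<Rightarrow> 'y::{real_inner,complete_space}) (f :: 'y \<Rightarrow> ereal)
       (\<rho>1 :: real) (b :: 'h) (b\<delta> :: 'h) (\<delta> :: real)
       (xs :: nat \<Rightarrow> 'x) (ys :: nat \<Rightarrow> 'y) (lam :: nat \<Rightarrow> 'h) (mu :: nat \<Rightarrow> 'y)
       (k\<delta> :: nat) (m :: nat) (xh :: 'x) (yh :: 'y).
      bounded_linear A \<and>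
      proper_fun f \<and> lsc_fun f \<and> strongly_convex f c0 \<and>
      dd_closed_linear_op D W \<and>
      (\<exists>c1 > 0. \<forall>x\<in>D. (norm (A x))\<^sup>2 + (norm (W x))\<^sup>2 \<ge> c1 * (norm x)\<^sup>2) \<and>
      \<rho>1 > 0 \<and>
      (\<exists>x\<in>D. A x = b \<and> W x \<in> effdom f) \<and>
      \<delta> > 0 \<and> norm (b\<delta> - b) \<le> \<delta> \<and>
      noisy_admm A D W f \<rho>1 \<rho>2 b\<delta> xs ys lam mu \<and>
      1 \<le> k\<delta> \<and>
      \<rho>1\<^sup>2 * (norm (A (xs k\<delta>) - b\<delta>))\<^sup>2 + \<rho>2\<^sup>2 * (norm (W (xs k\<delta>) - ys k\<delta>))\<^sup>2
        \<le> max (\<rho>1\<^sup>2) (\<rho>2\<^sup>2) * \<tau>\<^sup>2 * \<delta>\<^sup>2 \<and>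
      (\<forall>k. 1 \<le> k \<and> k < k\<delta> \<longrightarrow>
        \<rho>1\<^sup>2 * (norm (A (xs k) - b\<delta>))\<^sup>2 + \<rho>2\<^sup>2 * (norm (W (xs k) - ys k))\<^sup>2
          > max (\<rho>1\<^sup>2) (\<rho>2\<^sup>2) * \<tau>\<^sup>2 * \<delta>\<^sup>2) \<and>
      1 \<le> m \<and> m + 1 < k\<delta> \<and>
      xh \<in> D \<and> yh \<in> effdom f \<and> A xh = b \<and> W xh = yh
      \<longrightarrow>
      bregman f (mu k\<delta>) yh (ys k\<delta>) + ereal (c * admm_E A W \<rho>1 \<rho>2 b\<delta> xs ys k\<delta>)
        \<le> bregman f (mu m) yh (ys m)
           + ereal (max \<rho>1 \<rho>2 * \<tau> * \<delta>\<^sup>2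
              + C * (norm (W (xh - xs m)))\<^sup>2
              + C * admm_E A W \<rho>1 \<rho>2 b\<delta> xs ys m
              + C * (norm (W (xs m) - ys m))\<^sup>2
              + C * \<bar>inner (ys (m - 1) - ys m) (W (xh - xs (Suc m)))\<bar>) \<and>
      \<bar>inner (mu k\<delta>) (ys k\<delta> - yh)\<bar>
        \<le> \<bar>inner (mu m) (ys k\<delta> - yh)\<bar> + max \<rho>1 \<rho>2 * \<tau> * \<delta>\<^sup>2
           + C * (\<Sum>k = m..k\<delta>. admm_E A W \<rho>1 \<rho>2 b\<delta> xs ys k)
           + C * (norm (W (xs k\<delta> - xh)))\<^sup>2)"
  apply (rule exI[of _ 1], rule exI[of _ "admm_constant c0 \<rho>2 \<tau>"])
  apply (rule conjI[OF zero_less_one], rule conjI[OF admm_constant_pos[OF assms(3,1,2)]], intro allI impI)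
  apply (elim conjE)
  subgoal premises prems for A D W f \<rho>1 b b\<delta> \<delta> xs ys lam mu k\<delta> m xh yh
  proof -
    interpret admm_discrepancy_stopped A D W f c0 \<rho>1 \<rho>2 b\<delta> xs ys lam mu b \<tau> \<delta> k\<delta> xh
      by (intro admm_discrepancy_stopped.intro admm_iteration.intro admm_discrepancy_stopped_axioms.intro)
        (use prems assms in \<open>simp_all add: effdom_def\<close>)
    have m: "1 \<le> m" "m + 1 < k\<delta>" and W_xh: "W xh = yh" using prems by simp_all
    show ?thesis
      using bregman_estimate[OF m] multiplier_estimate[OF m] unfolding W_xh by (rule conjI)
  qed
  done

end
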